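(* Let $(\Xi,Z)$ be a random marked closed set. Its distribution (as a probability measure on $\Phi_{usc}$) is completely determined by the joint probabilities \[\mathbb{P}\big(\sup_{x\in B_i\cap\Xi}Z(x)<t_i,\ B_i\cap\Xi\neq\varnothing,\ i\in I;\ B_j\cap\Xi=\varnothing,\ j\in\{1,\ldots,n\}\setminus I\big),\] where $n\in\mathbb{N}$, $B_1,\ldots,B_n$ are compact subsets of $\mathbb{R}^d$, $t_1,\ldots,t_n\in\overline{\mathbb{R}}$, and $I\subseteq\{1,\ldots,n\}$.
   Context: $\overline{\mathbb{R}}=[-\infty,\infty]$. $\Phi_{usc}=\{(X,f):\,X\subseteq\mathbb{R}^d\text{ closed},\ f:X\rightarrow\overline{\mathbb{R}}\text{ upper semi-continuous}\}$, identified via $\tau(X,f)=\{(x,t)\in X\times\overline{\mathbb{R}}:\,t\leq f(x)\}$ with a family of closed subsets of $\mathbb{R}^d\times\overline{\mathbb{R}}$ (with the Fell topology and its Borel $\sigma$-field). Given a complete probability space $(\Omega,\mathcal{A},\mathbb{P})$, a random marked closed set is a map $(\Xi,Z):\Omega\rightarrow\Phi_{usc}$ such that $\{\omega:\,\tau(\Xi,Z)\cap B\neq\varnothing\}\in\mathcal{A}$ for every compact $B\subseteq\mathbb{R}^d\times\overline{\mathbb{R}}$. *)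

theory Defs
  imports "HOL-Probability.Probability"
begin

definition usc_on :: "'a::topological_space set \<Rightarrow> ('a \<Rightarrow> ereal) \<Rightarrow> bool" where
  "usc_on X f \<longleftrightarrow> (\<forall>t::ereal. openin (top_of_set X) {x \<in> X. f x < t})"

definition hypo :: "'a set \<Rightarrow> ('a \<Rightarrow> ereal) \<Rightarrow> ('a \<times> ereal) set" where
  "hypo X f = {(x, t). x \<in> X \<and> t \<le> f x}"

definition fell_topology :: "('b::topological_space) set topology" where
  "fell_topology = subtopology
     (topology_generated_by
        ({{F. closed F \<and> F \<inter> K = {}} | K. compact K} \<union>
         {{F. closed F \<and> F \<inter> G \<noteq> {}} | G. open G}))
     {F. closed F}"

definition borel_of_top :: "'c topology \<Rightarrow> 'c measure" where
  "borel_of_top T = sigma (topspace T) {U. openin T U}"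

definition random_marked_closed_set ::
  "'o measure \<Rightarrow> ('o \<Rightarrow> 'a::euclidean_space set) \<Rightarrow> ('o \<Rightarrow> 'a \<Rightarrow> ereal) \<Rightarrow> bool" where
  "random_marked_closed_set M Xi Z \<longleftrightarrow>
     (\<forall>\<omega>\<in>space M. closed (Xi \<omega>) \<and> usc_on (Xi \<omega>) (Z \<omega>)) \<and>
     (\<forall>B::('a \<times> ereal) set. compact B \<longrightarrow>
        {\<omega> \<in> space M. hypo (Xi \<omega>) (Z \<omega>) \<inter> B \<noteq> {}} \<in> sets M)"

definition rmcs_distr ::
  "'o measure \<Rightarrow> ('o \<Rightarrow> 'a::euclidean_space set) \<Rightarrow> ('o \<Rightarrow> 'a \<Rightarrow> ereal) \<Rightarrow> ('a \<times> ereal) set measure" where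
  "rmcs_distr M Xi Z = distr M (borel_of_top fell_topology) (\<lambda>\<omega>. hypo (Xi \<omega>) (Z \<omega>))"

definition joint_prob ::
  "'o measure \<Rightarrow> ('o \<Rightarrow> 'a set) \<Rightarrow> ('o \<Rightarrow> 'a \<Rightarrow> ereal) \<Rightarrow> nat \<Rightarrow> (nat \<Rightarrow> 'a set)
     \<Rightarrow> (nat \<Rightarrow> ereal) \<Rightarrow> nat set \<Rightarrow> real" where
  "joint_prob M Xi Z n B t I = measure M
     {\<omega> \<in> space M.
        (\<forall>i\<in>I. (SUP x\<in>B i \<inter> Xi \<omega>. Z \<omega> x) < t i \<and> B i \<inter> Xi \<omega> \<noteq> {}) \<and>
        (\<forall>j\<in>{1..n} - I. B j \<inter> Xi \<omega> = {})}"

end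

(*
  The hypograph of a random marked closed set (Xi, Z) is a random closed subset of
  R^d x [-inf, inf] that is downward closed in the mark coordinate.  On such closed
  hypographs the Borel sets of the Fell topology are generated by the events that the
  hypograph misses finitely many sets K_1 x [t_1, inf], ..., K_n x [t_n, inf] with compact
  K_i: every Fell-open set is a countable union of miss-and-hit sets of boxes K x [p, q]
  taken from a countable base, and a downward closed set meets K x [p, q] iff it meets
  K x [p, inf].  The miss events are closed under finite intersections, so by Dynkin's
  pi-lambda theorem they determine the distribution.  Splitting such an event according to
  the set I of those K_i that Xi hits gives the joint probabilities of the statement,
  because for the upper semicontinuous mark Z and compact nonempty K_i \<inter> Xi we have
  sup Z < t_i iff Z < t_i everywhere on K_i \<inter> Xi.
*)

theory Submission
  imports Defs
begin

section \<open>Countable bases of compact boxes\<close>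

definition ereal_rats :: "ereal set" where
  "ereal_rats = insert \<infinity> (insert (-\<infinity>) (range (\<lambda>r. ereal (real_of_rat r))))"

lemma countable_ereal_rats: "countable ereal_rats"
  by (simp add: ereal_rats_def)

lemma ereal_rats_upper_nhd:
  fixes S :: "ereal set"
  assumes "open S" "s \<in> S"
  obtains q where "q \<in> ereal_rats" "{s..q} \<subseteq> S" "s \<in> interior {..q}"
proof (cases "s = \<infinity>")
  case True
  show ?thesis
  proof (rule that[of \<infinity>])
    have "{..\<infinity>::ereal} = UNIV" by auto
    then show "s \<in> interior {..\<infinity>}" by simp
  qed (use True assms in \<open>auto simp: ereal_rats_def\<close>)
next
  case False
  then obtain b where b: "s < b" "{s..<b} \<subseteq> S"
    using open_right[OF assms, of \<infinity>] by (auto simp: less_le)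
  then obtain r where r: "s < ereal (real_of_rat r)" "ereal (real_of_rat r) < b"
    using ereal_dense3 by blast
  have "{..<ereal (real_of_rat r)} \<subseteq> interior {..ereal (real_of_rat r)}"
    by (rule interior_maximal) auto
  then have "s \<in> interior {..ereal (real_of_rat r)}" using r(1) by auto
  moreover have "{s..ereal (real_of_rat r)} \<subseteq> {s..<b}" using r(2) by auto
  ultimately show ?thesis
    using b(2) by (intro that[of "ereal (real_of_rat r)"]) (auto simp: ereal_rats_def)
qed

lemma ereal_rats_lower_nhd:
  fixes S :: "ereal set"
  assumes "open S" "s \<in> S"
  obtains p where "p \<in> ereal_rats" "{p..s} \<subseteq> S" "s \<in> interior {p..}"
proof (cases "s = -\<infinity>")
  case True
  show ?thesis
  proof (rule that[of "-\<infinity>"])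
    have "{-\<infinity>::ereal..} = UNIV" by auto
    then show "s \<in> interior {-\<infinity>..}" by simp
  qed (use True assms in \<open>auto simp: ereal_rats_def\<close>)
next
  case False
  then obtain b where b: "b < s" "{b<..s} \<subseteq> S"
    using open_left[OF assms, of "-\<infinity>"] by (auto simp: less_le)
  then obtain r where r: "b < ereal (real_of_rat r)" "ereal (real_of_rat r) < s"
    using ereal_dense3 by blast
  have "{ereal (real_of_rat r)<..} \<subseteq> interior {ereal (real_of_rat r)..}"
    by (rule interior_maximal) auto
  then have "s \<in> interior {ereal (real_of_rat r)..}" using r(2) by auto
  moreover have "{ereal (real_of_rat r)..s} \<subseteq> {b<..s}" using r(1) by auto
  ultimately show ?thesis
    using b(2) by (intro that[of "ereal (real_of_rat r)"]) (auto simp: ereal_rats_def)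
qed

lemma ereal_rats_interval_nhd:
  fixes S :: "ereal set"
  assumes "open S" "s \<in> S"
  obtains p q where "p \<in> ereal_rats" "q \<in> ereal_rats" "s \<in> interior {p..q}" "{p..q} \<subseteq> S"
proof -
  obtain p where p: "p \<in> ereal_rats" "{p..s} \<subseteq> S" "s \<in> interior {p..}"
    using ereal_rats_lower_nhd[OF assms] .
  obtain q where q: "q \<in> ereal_rats" "{s..q} \<subseteq> S" "s \<in> interior {..q}"
    using ereal_rats_upper_nhd[OF assms] .
  have "{p..q} = {p..} \<inter> {..q}" by auto
  then have "s \<in> interior {p..q}" using p(3) q(3) by simp
  moreover have "{p..q} \<subseteq> {p..s} \<union> {s..q}" by auto
  ultimately show ?thesis using p q by (intro that[of p q]) auto
qed

lemma countable_compact_nhds_base: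
  obtains \<K> :: "'a::{heine_borel, second_countable_topology} set set"
  where "countable \<K>" "\<And>K. K \<in> \<K> \<Longrightarrow> compact K"
    "\<And>V y. open V \<Longrightarrow> y \<in> V \<Longrightarrow> \<exists>K\<in>\<K>. y \<in> interior K \<and> K \<subseteq> V"
proof -
  obtain \<B> :: "'a set set" where \<B>: "countable \<B>" "topological_basis \<B>"
    using ex_countable_basis by blast
  show ?thesis
  proof (rule that[of "closure ` {b \<in> \<B>. bounded b}"])
    show "countable (closure ` {b \<in> \<B>. bounded b})" using \<B>(1) by simp
    show "compact K" if "K \<in> closure ` {b \<in> \<B>. bounded b}" for K
      using that by auto
    fix V :: "'a set" and y assume "open V" "y \<in> V"
    then obtain e where e: "e > 0" "ball y e \<subseteq> V"
      by (meson open_contains_ball)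
    obtain b where b: "b \<in> \<B>" "y \<in> b" "b \<subseteq> ball y (e/2)"
      using topological_basisE[OF \<B>(2), of "ball y (e/2)" y] e(1) by auto
    have "closure b \<subseteq> cball y (e/2)"
      using b(3) closure_minimal[OF _ closed_cball] ball_subset_cball by blast
    also have "\<dots> \<subseteq> V" using e by (auto simp: cball_subset_ball_iff)
    finally have "closure b \<subseteq> V" .
    moreover have "y \<in> interior (closure b)"
      using b(2) topological_basis_open[OF \<B>(2) b(1)] closure_subset interior_maximal by blast
    moreover have "bounded b" using b(3) bounded_ball bounded_subset by blast
    ultimately show "\<exists>K\<in>closure ` {b \<in> \<B>. bounded b}. y \<in> interior K \<and> K \<subseteq> V"
      using b(1) by blast
  qed
qed

definition compact_boxes :: "('a::topological_space \<times> ereal) set set" where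
  "compact_boxes = {K \<times> {p..q} | K p q. compact K \<and> p \<le> q}"

lemma countable_compact_box_base:
  obtains \<N> :: "('a::{heine_borel, second_countable_topology} \<times> ereal) set set"
  where "countable \<N>" "\<N> \<subseteq> compact_boxes"
    "\<And>V y. open V \<Longrightarrow> y \<in> V \<Longrightarrow> \<exists>N\<in>\<N>. y \<in> interior N \<and> N \<subseteq> V"
proof -
  obtain \<K> :: "'a set set" where \<K>: "countable \<K>" "\<And>K. K \<in> \<K> \<Longrightarrow> compact K"
    "\<And>V y. open V \<Longrightarrow> y \<in> V \<Longrightarrow> \<exists>K\<in>\<K>. y \<in> interior K \<and> K \<subseteq> V"
    using countable_compact_nhds_base by blast
  define \<N> where "\<N> = {K \<times> {p..q} | K p q. K \<in> \<K> \<and> p \<in> ereal_rats \<and> q \<in> ereal_rats \<and> p \<le> q}"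
  show ?thesis
  proof (rule that[of \<N>])
    have "\<N> \<subseteq> (\<lambda>(K, p, q). K \<times> {p..q}) ` (\<K> \<times> ereal_rats \<times> ereal_rats)"
      unfolding \<N>_def by auto
    then show "countable \<N>"
      by (rule countable_subset) (intro countable_image countable_SIGMA \<K>(1) countable_ereal_rats)
    show "\<N> \<subseteq> compact_boxes" using \<K>(2) by (auto simp: \<N>_def compact_boxes_def)
    fix V :: "('a \<times> ereal) set" and y assume "open V" "y \<in> V"
    then obtain A S where AS: "open A" "open S" "fst y \<in> A" "snd y \<in> S" "A \<times> S \<subseteq> V"
      by (metis open_prod_elim mem_Times_iff)
    obtain K where K: "K \<in> \<K>" "fst y \<in> interior K" "K \<subseteq> A" using \<K>(3)[OF AS(1,3)] by blast
    obtain p q where pq: "p \<in> ereal_rats" "q \<in> ereal_rats" "snd y \<in> interior {p..q}" "{p..q} \<subseteq> S"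
      using ereal_rats_interval_nhd[OF AS(2,4)] .
    have "p \<le> q" using pq(3) interior_subset by fastforce
    then have "K \<times> {p..q} \<in> \<N>" using K(1) pq(1,2) by (auto simp: \<N>_def)
    moreover have "y \<in> interior (K \<times> {p..q})" using K(2) pq(3) by (simp add: interior_Times mem_Times_iff)
    moreover have "K \<times> {p..q} \<subseteq> V" using K(3) pq(4) AS(5) by blast
    ultimately show "\<exists>N\<in>\<N>. y \<in> interior N \<and> N \<subseteq> V" by blast
  qed
qed

section \<open>Miss-and-hit neighbourhoods in the Fell topology\<close>

definition fell_subbasis :: "'b::topological_space set set set" where
  "fell_subbasis = {{F. closed F \<and> F \<inter> K = {}} | K. compact K} \<union> {{F. closed F \<and> F \<inter> G \<noteq> {}} | G. open G}"

lemma fell_topology_eq: "fell_topology = subtopology (topology_generated_by fell_subbasis) {F. closed F}"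
  by (simp add: fell_topology_def fell_subbasis_def)

lemma topspace_fell_topology: "topspace fell_topology = {F. closed F}"
proof -
  have "{F. closed F} \<in> fell_subbasis"
    unfolding fell_subbasis_def by (intro UnI1 CollectI exI[of _ "{}"]) auto
  then show ?thesis
    unfolding fell_topology_eq by auto
qed

definition miss_hit :: "'b::topological_space set set \<Rightarrow> 'b set set \<Rightarrow> 'b set set" where
  "miss_hit Ks Gs = {F. closed F \<and> (\<forall>K\<in>Ks. F \<inter> K = {}) \<and> (\<forall>G\<in>Gs. F \<inter> G \<noteq> {})}"

lemma miss_hit_Un: "miss_hit (K1 \<union> K2) (G1 \<union> G2) = miss_hit K1 G1 \<inter> miss_hit K2 G2"
  unfolding miss_hit_def by blast

context
  fixes \<C> :: "'b::topological_space set set"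
  assumes nhds_base: "\<And>V y. open V \<Longrightarrow> y \<in> V \<Longrightarrow> \<exists>C\<in>\<C>. y \<in> interior C \<and> C \<subseteq> V"
begin

lemma miss_hit_nhd_in_fell_subbasis:
  assumes "S \<in> fell_subbasis" "F \<in> S"
  obtains Ks Gs where "finite Ks" "Ks \<subseteq> \<C>" "finite Gs" "Gs \<subseteq> \<C>" "F \<in> miss_hit Ks Gs" "miss_hit Ks Gs \<subseteq> S"
proof -
  consider (miss) K where "compact K" "S = {F. closed F \<and> F \<inter> K = {}}"
    | (hit) G where "open G" "S = {F. closed F \<and> F \<inter> G \<noteq> {}}"
    using assms(1) unfolding fell_subbasis_def by (elim UnE CollectE exE conjE) iprover+
  then show thesis
  proof cases
    case miss
    with assms(2) have F: "closed F" "K \<subseteq> - F" by auto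
    have cover: "K \<subseteq> (\<Union>C\<in>{C \<in> \<C>. C \<subseteq> - F}. interior C)"
    proof
      fix y assume "y \<in> K"
      then obtain C where "C \<in> \<C>" "y \<in> interior C" "C \<subseteq> - F"
        using nhds_base[of "- F" y] F by auto
      then show "y \<in> (\<Union>C\<in>{C \<in> \<C>. C \<subseteq> - F}. interior C)" by blast
    qed
    obtain Ks where Ks: "Ks \<subseteq> {C \<in> \<C>. C \<subseteq> - F}" "finite Ks" "K \<subseteq> (\<Union>C\<in>Ks. interior C)"
      by (rule compactE_image[OF miss(1) open_interior cover])
    have "K \<subseteq> \<Union>Ks" using Ks(3) interior_subset by blast
    then have "miss_hit Ks {} \<subseteq> S" unfolding miss(2) miss_hit_def by blast
    moreover have "F \<in> miss_hit Ks {}" using Ks(1) F(1) unfolding miss_hit_def by blast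
    ultimately show thesis using Ks(1,2) by (intro that[of Ks "{}"]) auto
  next
    case hit
    with assms(2) obtain y where y: "closed F" "y \<in> F" "y \<in> G" by auto
    then obtain C where C: "C \<in> \<C>" "y \<in> C" "C \<subseteq> G"
      using nhds_base[OF hit(1)] interior_subset by blast
    have "miss_hit {} {C} \<subseteq> S" using C(3) unfolding hit(2) miss_hit_def by blast
    moreover have "F \<in> miss_hit {} {C}" using C(2) y unfolding miss_hit_def by blast
    ultimately show thesis using C(1) by (intro that[of "{}" "{C}"]) auto
  qed
qed

lemma miss_hit_nhd_in_generated:
  assumes "generate_topology_on fell_subbasis V" "F \<in> V"
  shows "\<exists>Ks Gs. finite Ks \<and> Ks \<subseteq> \<C> \<and> finite Gs \<and> Gs \<subseteq> \<C> \<and> F \<in> miss_hit Ks Gs \<and> miss_hit Ks Gs \<subseteq> V"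
  using assms
proof (induction arbitrary: F rule: generate_topology_on.induct)
  case (Int a b)
  obtain K1 G1 where 1: "finite K1" "K1 \<subseteq> \<C>" "finite G1" "G1 \<subseteq> \<C>" "F \<in> miss_hit K1 G1" "miss_hit K1 G1 \<subseteq> a"
    using Int.IH(1)[of F] Int.prems by auto
  obtain K2 G2 where 2: "finite K2" "K2 \<subseteq> \<C>" "finite G2" "G2 \<subseteq> \<C>" "F \<in> miss_hit K2 G2" "miss_hit K2 G2 \<subseteq> b"
    using Int.IH(2)[of F] Int.prems by auto
  have "F \<in> miss_hit (K1 \<union> K2) (G1 \<union> G2)" "miss_hit (K1 \<union> K2) (G1 \<union> G2) \<subseteq> a \<inter> b"
    using 1 2 by (auto simp: miss_hit_Un)
  with 1 2 show ?case
    by (intro exI[of _ "K1 \<union> K2"] exI[of _ "G1 \<union> G2"]) simp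
next
  case (UN \<U>)
  then obtain U where "U \<in> \<U>" "F \<in> U" by auto
  with UN.IH obtain Ks Gs where "finite Ks" "Ks \<subseteq> \<C>" "finite Gs" "Gs \<subseteq> \<C>" "F \<in> miss_hit Ks Gs" "miss_hit Ks Gs \<subseteq> U"
    by meson
  with \<open>U \<in> \<U>\<close> show ?case
    by (intro exI[of _ Ks] exI[of _ Gs]) auto
next
  case (Basis S)
  then obtain Ks Gs where "finite Ks" "Ks \<subseteq> \<C>" "finite Gs" "Gs \<subseteq> \<C>" "F \<in> miss_hit Ks Gs" "miss_hit Ks Gs \<subseteq> S"
    by (rule miss_hit_nhd_in_fell_subbasis)
  then show ?case
    by (intro exI[of _ Ks] exI[of _ Gs]) simp
qed simp

lemma fell_open_eq_Union_miss_hit: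
  assumes "openin fell_topology U"
  shows "U = \<Union>{miss_hit Ks Gs | Ks Gs. finite Ks \<and> Ks \<subseteq> \<C> \<and> finite Gs \<and> Gs \<subseteq> \<C> \<and> miss_hit Ks Gs \<subseteq> U}"
    (is "U = \<Union>?\<U>")
proof
  obtain V where V_open: "openin (topology_generated_by fell_subbasis) V" and V: "U = V \<inter> {F. closed F}"
    using assms unfolding fell_topology_eq openin_subtopology by auto
  from V_open have gen: "generate_topology_on fell_subbasis V"
    by (rule openin_topology_generated_by)
  show "U \<subseteq> \<Union>?\<U>"
  proof
    fix F assume "F \<in> U"
    then obtain Ks Gs where KG: "finite Ks" "Ks \<subseteq> \<C>" "finite Gs" "Gs \<subseteq> \<C>" "F \<in> miss_hit Ks Gs" "miss_hit Ks Gs \<subseteq> V"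
      using miss_hit_nhd_in_generated[OF gen, of F] V by auto
    have "miss_hit Ks Gs \<subseteq> {F. closed F}"
      by (auto simp: miss_hit_def)
    with KG(6) have "miss_hit Ks Gs \<subseteq> U"
      unfolding V by (rule Int_greatest)
    with KG(1-4) have "miss_hit Ks Gs \<in> ?\<U>"
      by (intro CollectI exI[of _ Ks] exI[of _ Gs]) simp
    with KG(5) show "F \<in> \<Union>?\<U>" by (rule UnionI[rotated])
  qed
next
  show "\<Union>?\<U> \<subseteq> U" by (rule Union_least) auto
qed

end

section \<open>Hypographs of upper semicontinuous marks\<close>

lemma usc_onE:
  assumes "usc_on X f"
  obtains T where "\<And>r. open (T r)" "\<And>r. {x \<in> X. f x < r} = X \<inter> T r"
proof -
  have "\<forall>r. \<exists>T. open T \<and> {x \<in> X. f x < r} = X \<inter> T"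
    using assms unfolding usc_on_def openin_open by blast
  then obtain T where "\<forall>r. open (T r) \<and> {x \<in> X. f x < r} = X \<inter> T r"
    by metis
  then show thesis by (intro that) auto
qed

lemma closed_hypo:
  fixes f :: "'a::topological_space \<Rightarrow> ereal"
  assumes "closed X" "usc_on X f"
  shows "closed (hypo X f)"
proof -
  obtain T where T: "\<And>r. open (T r)" "\<And>r. {x \<in> X. f x < r} = X \<inter> T r"
    using usc_onE[OF assms(2)] by blast
  have "- hypo X f = (- X) \<times> UNIV \<union> (\<Union>r. T r \<times> {r<..})"
  proof (intro equalityI subsetI)
    fix y assume y: "y \<in> - hypo X f"
    obtain x s where xs: "y = (x, s)" by force
    show "y \<in> (- X) \<times> UNIV \<union> (\<Union>r. T r \<times> {r<..})"
    proof (cases "x \<in> X")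
      case True
      with y xs have "f x < s" by (auto simp: hypo_def)
      then obtain r where "f x < r" "r < s" using dense by blast
      moreover have "x \<in> T r" if "f x < r" for r
        using T(2)[of r] True that by blast
      ultimately show ?thesis using xs by blast
    qed (use xs in auto)
  next
    fix y assume "y \<in> (- X) \<times> UNIV \<union> (\<Union>r. T r \<times> {r<..})"
    then consider "fst y \<notin> X" | r where "fst y \<in> T r" "r < snd y" by auto
    then show "y \<in> - hypo X f"
    proof cases
      case (2 r)
      have "f (fst y) < snd y" if "fst y \<in> X"
      proof -
        have "f (fst y) < r" using T(2)[of r] 2(1) that by blast
        then show ?thesis using 2(2) by (rule order.strict_trans)
      qed
      then show ?thesis by (auto simp: hypo_def not_le[symmetric])
    qed (auto simp: hypo_def)
  qed
  moreover have "open ((- X) \<times> (UNIV :: ereal set) \<union> (\<Union>r. T r \<times> {r<..}))"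
    using assms(1) T(1) by (intro open_Un open_Times open_UN) (auto intro: open_Times)
  ultimately have "open (- hypo X f)" by simp
  then show ?thesis unfolding closed_def .
qed

lemma SUP_less_iff_usc_on:
  fixes g :: "'a::topological_space \<Rightarrow> ereal"
  assumes "compact C" "C \<subseteq> X" "usc_on X g" "C \<noteq> {}"
  shows "(SUP x\<in>C. g x) < t \<longleftrightarrow> (\<forall>x\<in>C. g x < t)"
proof
  assume "(SUP x\<in>C. g x) < t"
  then show "\<forall>x\<in>C. g x < t" by (meson SUP_upper order.strict_trans1)
next
  assume less: "\<forall>x\<in>C. g x < t"
  obtain T where T: "\<And>r. open (T r)" "\<And>r. {x \<in> X. g x < r} = X \<inter> T r"
    using usc_onE[OF assms(3)] by blast
  have cover: "C \<subseteq> (\<Union>r\<in>{..<t}. T r)"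
  proof
    fix x assume x: "x \<in> C"
    then obtain r where "g x < r" "r < t" using less dense by blast
    then show "x \<in> (\<Union>r\<in>{..<t}. T r)" using T(2)[of r] x assms(2) by blast
  qed
  obtain R where R: "R \<subseteq> {..<t}" "finite R" "C \<subseteq> (\<Union>r\<in>R. T r)"
    by (rule compactE_image[OF assms(1) T(1) cover])
  have "R \<noteq> {}" using R(3) assms(4) by auto
  have "(SUP x\<in>C. g x) \<le> Max R"
  proof (rule SUP_least)
    fix x assume x: "x \<in> C"
    then obtain r where "r \<in> R" "x \<in> T r" using R(3) by blast
    then have "g x < r" "r \<le> Max R" using T(2)[of r] x assms(2) R(2) by auto
    then show "g x \<le> Max R" by simp
  qed
  also have "Max R < t" using R(1,2) \<open>R \<noteq> {}\<close> by auto
  finally show "(SUP x\<in>C. g x) < t" .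
qed

lemma hypo_Int_Times_atLeast_eq_empty: "hypo X f \<inter> K \<times> {t..} = {} \<longleftrightarrow> (\<forall>x\<in>K \<inter> X. f x < t)"
proof -
  have "hypo X f \<inter> K \<times> {t..} = {} \<longleftrightarrow> (\<forall>x\<in>K \<inter> X. \<not> t \<le> f x)"
    by (auto simp: hypo_def intro: order_trans)
  then show ?thesis by (simp add: not_le)
qed

lemma hypo_Int_Times_UNIV_eq_empty: "hypo X f \<inter> K \<times> UNIV = {} \<longleftrightarrow> K \<inter> X = {}"
  by (auto simp: hypo_def intro: exI[of _ "-\<infinity>"])

definition down_closed :: "('a \<times> 'b::order) set \<Rightarrow> bool" where
  "down_closed F \<longleftrightarrow> (\<forall>x s t. (x, t) \<in> F \<longrightarrow> s \<le> t \<longrightarrow> (x, s) \<in> F)"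

definition closed_hypographs :: "('a::topological_space \<times> ereal) set set" where
  "closed_hypographs = {F. closed F \<and> down_closed F}"

lemma hypo_in_closed_hypographs: "closed X \<Longrightarrow> usc_on X f \<Longrightarrow> hypo X f \<in> closed_hypographs"
  using closed_hypo[of X f] by (auto simp: closed_hypographs_def down_closed_def hypo_def intro: order_trans)

lemma down_closed_Int_box_eq_empty:
  fixes F :: "('a \<times> 'b::linorder) set"
  assumes "down_closed F" "p \<le> q"
  shows "F \<inter> K \<times> {p..q} = {} \<longleftrightarrow> F \<inter> K \<times> {p..} = {}"
proof
  assume empty: "F \<inter> K \<times> {p..q} = {}"
  show "F \<inter> K \<times> {p..} = {}"
  proof (rule equals0I)
    fix y assume "y \<in> F \<inter> K \<times> {p..}"
    then obtain x s where "(x, s) \<in> F" "x \<in> K" "p \<le> s" by auto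
    then have "(x, min s q) \<in> F \<inter> K \<times> {p..q}"
      using assms unfolding down_closed_def by auto
    with empty show False by blast
  qed
qed auto

section \<open>Miss events of closed hypographs\<close>

definition hypo_miss :: "('a set \<times> ereal) set \<Rightarrow> ('a::topological_space \<times> ereal) set set" where
  "hypo_miss P = {F \<in> closed_hypographs. \<forall>(K, t)\<in>P. F \<inter> K \<times> {t..} = {}}"

definition hypo_miss_sets :: "('a::topological_space \<times> ereal) set set set" where
  "hypo_miss_sets = {hypo_miss P | P. finite P \<and> (\<forall>(K, t)\<in>P. compact K)}"

definition hypo_space :: "('a::topological_space \<times> ereal) set measure" where
  "hypo_space = sigma closed_hypographs hypo_miss_sets"

lemma hypo_miss_sets_Pow: "hypo_miss_sets \<subseteq> Pow closed_hypographs"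
  by (auto simp: hypo_miss_sets_def hypo_miss_def)

lemma space_hypo_space: "space hypo_space = closed_hypographs"
  by (simp add: hypo_space_def hypo_miss_sets_Pow)

lemma sets_hypo_space: "sets hypo_space = sigma_sets closed_hypographs hypo_miss_sets"
  by (simp add: hypo_space_def hypo_miss_sets_Pow)

lemma closed_hypographs_in_hypo_miss_sets: "closed_hypographs \<in> hypo_miss_sets"
proof -
  have "closed_hypographs = hypo_miss {}" by (simp add: hypo_miss_def)
  then show ?thesis unfolding hypo_miss_sets_def by blast
qed

lemma Int_stable_hypo_miss_sets: "Int_stable (hypo_miss_sets :: ('a::topological_space \<times> ereal) set set set)"
proof (rule Int_stableI)
  fix A B :: "('a \<times> ereal) set set" assume "A \<in> hypo_miss_sets" "B \<in> hypo_miss_sets"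
  then obtain P Q where "A = hypo_miss P" "finite P" "\<forall>(K, t)\<in>P. compact K"
    "B = hypo_miss Q" "finite Q" "\<forall>(K, t)\<in>Q. compact K"
    unfolding hypo_miss_sets_def by blast
  moreover have "hypo_miss P \<inter> hypo_miss Q = hypo_miss (P \<union> Q)"
    unfolding hypo_miss_def by blast
  ultimately show "A \<inter> B \<in> hypo_miss_sets"
    unfolding hypo_miss_sets_def by blast
qed

lemma miss_box_in_sets_hypo_space:
  assumes "N \<in> compact_boxes"
  shows "{F \<in> closed_hypographs. F \<inter> N = {}} \<in> sets hypo_space"
proof -
  obtain K p q where N: "N = K \<times> {p..q}" "compact K" "p \<le> q"
    using assms unfolding compact_boxes_def by blast
  then have "{F \<in> closed_hypographs. F \<inter> N = {}} = hypo_miss {(K, p)}"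
    by (auto simp: hypo_miss_def closed_hypographs_def down_closed_Int_box_eq_empty)
  also have "\<dots> \<in> hypo_miss_sets"
    using N(2) unfolding hypo_miss_sets_def by blast
  finally show ?thesis
    unfolding sets_hypo_space by blast
qed

lemma miss_hit_Int_closed_hypographs_in_sets:
  assumes "finite Ks" "Ks \<subseteq> compact_boxes" "finite Gs" "Gs \<subseteq> compact_boxes"
  shows "miss_hit Ks Gs \<inter> closed_hypographs \<in> sets hypo_space"
proof -
  have miss: "{F \<in> space hypo_space. F \<inter> N = {}} \<in> sets hypo_space" if "N \<in> compact_boxes" for N
    using miss_box_in_sets_hypo_space[OF that] by (simp add: space_hypo_space)
  have "miss_hit Ks Gs \<inter> closed_hypographs
      = {F \<in> space hypo_space. (\<forall>K\<in>Ks. F \<inter> K = {}) \<and> (\<forall>G\<in>Gs. \<not> F \<inter> G = {})}"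
    by (auto simp: miss_hit_def space_hypo_space closed_hypographs_def)
  also have "\<dots> \<in> sets hypo_space"
    using assms miss by (intro sets.sets_Collect_conj sets.sets_Collect_finite_All sets.sets_Collect_neg) auto
  finally show ?thesis .
qed

lemma measurable_id_hypo_space_fell:
  "id \<in> measurable (hypo_space :: ('a::{heine_borel, second_countable_topology} \<times> ereal) set measure)
     (borel_of_top fell_topology)"
  unfolding borel_of_top_def topspace_fell_topology
proof (rule measurable_measure_of)
  show "{U. openin fell_topology U} \<subseteq> Pow {F :: ('a \<times> ereal) set. closed F}"
    using openin_subset topspace_fell_topology by blast
  show "id \<in> space hypo_space \<rightarrow> {F :: ('a \<times> ereal) set. closed F}"
    by (auto simp: space_hypo_space closed_hypographs_def)
next
  fix U :: "('a \<times> ereal) set set" assume "U \<in> {U. openin fell_topology U}"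
  then have U: "openin fell_topology U" by simp
  obtain \<N> :: "('a \<times> ereal) set set" where \<N>: "countable \<N>" "\<N> \<subseteq> compact_boxes"
    "\<And>V y. open V \<Longrightarrow> y \<in> V \<Longrightarrow> \<exists>N\<in>\<N>. y \<in> interior N \<and> N \<subseteq> V"
    using countable_compact_box_base by blast
  define \<U> where "\<U> = {miss_hit Ks Gs | Ks Gs. finite Ks \<and> Ks \<subseteq> \<N> \<and> finite Gs \<and> Gs \<subseteq> \<N> \<and> miss_hit Ks Gs \<subseteq> U}"
  have "U = \<Union>\<U>"
    unfolding \<U>_def using \<N>(3) U by (rule fell_open_eq_Union_miss_hit)
  then have "id -` U \<inter> space hypo_space = (\<Union>W\<in>\<U>. W \<inter> closed_hypographs)"
    by (auto simp: space_hypo_space)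
  also have "\<dots> \<in> sets hypo_space"
  proof (rule sets.countable_UN')
    have "\<U> \<subseteq> (\<lambda>(Ks, Gs). miss_hit Ks Gs) ` ({Ks. finite Ks \<and> Ks \<subseteq> \<N>} \<times> {Gs. finite Gs \<and> Gs \<subseteq> \<N>})"
      unfolding \<U>_def by auto
    then show "countable \<U>"
      by (rule countable_subset) (intro countable_image countable_SIGMA countable_Collect_finite_subset \<N>(1))
    show "(\<lambda>W. W \<inter> closed_hypographs) ` \<U> \<subseteq> sets hypo_space"
      unfolding \<U>_def using \<N>(2) by (auto intro!: miss_hit_Int_closed_hypographs_in_sets)
  qed
  finally show "id -` U \<inter> space hypo_space \<in> sets hypo_space" .
qed

section \<open>Distribution of a random marked closed set\<close>

lemma rmcs_hypo_in_closed_hypographs: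
  "random_marked_closed_set M Xi Z \<Longrightarrow> \<omega> \<in> space M \<Longrightarrow> hypo (Xi \<omega>) (Z \<omega>) \<in> closed_hypographs"
  unfolding random_marked_closed_set_def by (blast intro: hypo_in_closed_hypographs)

lemma rmcs_miss_sets:
  assumes "random_marked_closed_set M Xi Z" "compact C"
  shows "{\<omega> \<in> space M. hypo (Xi \<omega>) (Z \<omega>) \<inter> C = {}} \<in> sets M"
proof -
  have "{\<omega> \<in> space M. hypo (Xi \<omega>) (Z \<omega>) \<inter> C \<noteq> {}} \<in> sets M"
    using assms unfolding random_marked_closed_set_def by blast
  moreover have "{\<omega> \<in> space M. hypo (Xi \<omega>) (Z \<omega>) \<inter> C = {}}
      = space M - {\<omega> \<in> space M. hypo (Xi \<omega>) (Z \<omega>) \<inter> C \<noteq> {}}"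
    by auto
  ultimately show ?thesis by auto
qed

lemma joint_prob_event_iff:
  fixes f :: "'a::topological_space \<Rightarrow> ereal"
  assumes "closed X" "usc_on X f" "\<forall>i\<in>{1..n}. compact (B i)" "I \<subseteq> {1..n}"
  shows "(\<forall>i\<in>I. (SUP x\<in>B i \<inter> X. f x) < t i \<and> B i \<inter> X \<noteq> {}) \<and> (\<forall>j\<in>{1..n} - I. B j \<inter> X = {})
    \<longleftrightarrow> (\<forall>i\<in>{1..n}. hypo X f \<inter> B i \<times> {t i..} = {}) \<and> {i \<in> {1..n}. hypo X f \<inter> B i \<times> UNIV \<noteq> {}} = I"
proof -
  have SUP_iff: "(SUP x\<in>B i \<inter> X. f x) < t i \<longleftrightarrow> (\<forall>x\<in>B i \<inter> X. f x < t i)"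
    if "i \<in> {1..n}" "B i \<inter> X \<noteq> {}" for i
    using assms that by (intro SUP_less_iff_usc_on) auto
  have "(\<forall>i\<in>I. (SUP x\<in>B i \<inter> X. f x) < t i \<and> B i \<inter> X \<noteq> {}) \<and> (\<forall>j\<in>{1..n} - I. B j \<inter> X = {})
    \<longleftrightarrow> (\<forall>i\<in>{1..n}. \<forall>x\<in>B i \<inter> X. f x < t i) \<and> {i \<in> {1..n}. B i \<inter> X \<noteq> {}} = I"
    (is "?joint \<longleftrightarrow> ?below \<and> ?hits")
  proof
    assume joint: ?joint
    have "\<forall>x\<in>B i \<inter> X. f x < t i" if "i \<in> {1..n}" for i
    proof (cases "i \<in> I")
      case True
      then show ?thesis using joint SUP_iff[OF that] by blast
    qed (use joint that in auto)
    moreover have ?hits using joint assms(4) by auto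
    ultimately show "?below \<and> ?hits" by blast
  next
    assume below_hits: "?below \<and> ?hits"
    then have "i \<in> {1..n} \<and> B i \<inter> X \<noteq> {}" if "i \<in> I" for i
      using that by blast
    with below_hits show ?joint
      using SUP_iff by auto
  qed
  then show ?thesis
    unfolding hypo_Int_Times_atLeast_eq_empty hypo_Int_Times_UNIV_eq_empty .
qed

lemma measurable_hypo_hypo_space:
  fixes Xi :: "'o \<Rightarrow> 'a::euclidean_space set"
  assumes rmcs: "random_marked_closed_set M Xi Z"
  shows "(\<lambda>\<omega>. hypo (Xi \<omega>) (Z \<omega>)) \<in> measurable M hypo_space"
  unfolding hypo_space_def
proof (rule measurable_measure_of[OF hypo_miss_sets_Pow])
  show "(\<lambda>\<omega>. hypo (Xi \<omega>) (Z \<omega>)) \<in> space M \<rightarrow> closed_hypographs"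
    using rmcs_hypo_in_closed_hypographs[OF rmcs] by blast
next
  fix A :: "('a \<times> ereal) set set" assume "A \<in> hypo_miss_sets"
  then obtain P where P: "A = hypo_miss P" "finite P" "\<forall>(K, t)\<in>P. compact K"
    unfolding hypo_miss_sets_def by blast
  define L where "L = (\<Union>(K, t)\<in>P. K \<times> {t..})"
  have "compact L"
    unfolding L_def using P(2,3) by (auto intro!: compact_UN compact_Times simp: compact_eq_closed)
  moreover have "(\<lambda>\<omega>. hypo (Xi \<omega>) (Z \<omega>)) -` A \<inter> space M = {\<omega> \<in> space M. hypo (Xi \<omega>) (Z \<omega>) \<inter> L = {}}"
    using rmcs_hypo_in_closed_hypographs[OF rmcs] unfolding P(1) hypo_miss_def L_def by auto
  ultimately show "(\<lambda>\<omega>. hypo (Xi \<omega>) (Z \<omega>)) -` A \<inter> space M \<in> sets M"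
    using rmcs_miss_sets[OF rmcs] by simp
qed

lemma rmcs_distr_eq_distr_hypo_space:
  fixes Xi :: "'o \<Rightarrow> 'a::euclidean_space set"
  assumes "random_marked_closed_set M Xi Z"
  shows "rmcs_distr M Xi Z
    = distr (distr M hypo_space (\<lambda>\<omega>. hypo (Xi \<omega>) (Z \<omega>))) (borel_of_top fell_topology) id"
  by (subst distr_distr[OF measurable_id_hypo_space_fell measurable_hypo_hypo_space[OF assms]])
    (simp add: rmcs_distr_def comp_def)

lemma measure_hypo_miss_eq_sum_joint_prob:
  fixes Xi :: "'o \<Rightarrow> 'a::euclidean_space set"
  assumes rmcs: "random_marked_closed_set M Xi Z" and "finite_measure M"
    and compact: "\<forall>i\<in>{1..n}. compact (B i)"
  shows "measure M {\<omega> \<in> space M. \<forall>i\<in>{1..n}. hypo (Xi \<omega>) (Z \<omega>) \<inter> B i \<times> {t i..} = {}}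
    = (\<Sum>I\<in>Pow {1..n}. joint_prob M Xi Z n B t I)"
proof -
  interpret finite_measure M by fact
  define E where "E I = {\<omega> \<in> space M. (\<forall>i\<in>{1..n}. hypo (Xi \<omega>) (Z \<omega>) \<inter> B i \<times> {t i..} = {}) \<and>
      {i \<in> {1..n}. hypo (Xi \<omega>) (Z \<omega>) \<inter> B i \<times> UNIV \<noteq> {}} = I}" for I
  have joint_prob_eq: "joint_prob M Xi Z n B t I = measure M (E I)" if "I \<subseteq> {1..n}" for I
    unfolding joint_prob_def E_def using rmcs compact that
    by (intro arg_cong[where f = "measure M"] Collect_cong conj_cong refl joint_prob_event_iff)
      (auto simp: random_marked_closed_set_def)
  have "E I \<in> sets M" if "I \<subseteq> {1..n}" for I
  proof -
    have "E I = {\<omega> \<in> space M. (\<forall>i\<in>{1..n}. hypo (Xi \<omega>) (Z \<omega>) \<inter> B i \<times> {t i..} = {}) \<and>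
        (\<forall>i\<in>I. \<not> hypo (Xi \<omega>) (Z \<omega>) \<inter> B i \<times> UNIV = {}) \<and>
        (\<forall>j\<in>{1..n} - I. hypo (Xi \<omega>) (Z \<omega>) \<inter> B j \<times> UNIV = {})}"
      unfolding E_def using that by auto
    also have "\<dots> \<in> sets M"
      using compact that finite_subset[OF that]
      by (intro sets.sets_Collect_conj sets.sets_Collect_finite_All sets.sets_Collect_neg rmcs_miss_sets[OF rmcs])
        (auto simp: compact_eq_closed intro!: compact_Times)
    finally show ?thesis .
  qed
  moreover have "{\<omega> \<in> space M. \<forall>i\<in>{1..n}. hypo (Xi \<omega>) (Z \<omega>) \<inter> B i \<times> {t i..} = {}} = (\<Union>I\<in>Pow {1..n}. E I)"
    by (auto simp: E_def)
  moreover have "disjoint_family_on E (Pow {1..n})"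
    by (auto simp: disjoint_family_on_def E_def)
  ultimately show ?thesis
    using joint_prob_eq by (auto intro!: finite_measure_finite_Union sum.cong)
qed

lemma emeasure_distr_hypo_miss:
  fixes Xi :: "'o \<Rightarrow> 'a::euclidean_space set"
  assumes rmcs: "random_marked_closed_set M Xi Z" and "prob_space M"
    and compact: "\<forall>i\<in>{1..n}. compact (B i)"
  shows "emeasure (distr M hypo_space (\<lambda>\<omega>. hypo (Xi \<omega>) (Z \<omega>))) (hypo_miss ((\<lambda>i. (B i, t i)) ` {1..n}))
    = ennreal (\<Sum>I\<in>Pow {1..n}. joint_prob M Xi Z n B t I)"
proof -
  interpret prob_space M by fact
  let ?P = "(\<lambda>i. (B i, t i)) ` {1..n}"
  have "hypo_miss ?P \<in> sets hypo_space"
    using compact unfolding sets_hypo_space hypo_miss_sets_def by blast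
  then have "emeasure (distr M hypo_space (\<lambda>\<omega>. hypo (Xi \<omega>) (Z \<omega>))) (hypo_miss ?P)
      = emeasure M ((\<lambda>\<omega>. hypo (Xi \<omega>) (Z \<omega>)) -` hypo_miss ?P \<inter> space M)"
    by (rule emeasure_distr[OF measurable_hypo_hypo_space[OF rmcs]])
  also have "(\<lambda>\<omega>. hypo (Xi \<omega>) (Z \<omega>)) -` hypo_miss ?P \<inter> space M
      = {\<omega> \<in> space M. \<forall>i\<in>{1..n}. hypo (Xi \<omega>) (Z \<omega>) \<inter> B i \<times> {t i..} = {}}"
    using rmcs_hypo_in_closed_hypographs[OF rmcs] by (auto simp: hypo_miss_def)
  also have "emeasure M \<dots> = ennreal (\<Sum>I\<in>Pow {1..n}. joint_prob M Xi Z n B t I)"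
    using measure_hypo_miss_eq_sum_joint_prob[OF rmcs _ compact] emeasure_eq_measure
    by (simp add: finite_measure_axioms)
  finally show ?thesis .
qed

lemma distr_hypo_space_eqI:
  fixes Xi1 :: "'o1 \<Rightarrow> 'a::euclidean_space set" and Xi2 :: "'o2 \<Rightarrow> 'a set"
  assumes "prob_space M1" "prob_space M2"
    and rmcs1: "random_marked_closed_set M1 Xi1 Z1" and rmcs2: "random_marked_closed_set M2 Xi2 Z2"
    and joint_prob_eq: "\<And>n B t I. (\<forall>i\<in>{1..n}. compact (B i)) \<Longrightarrow> I \<subseteq> {1..n} \<Longrightarrow>
           joint_prob M1 Xi1 Z1 n B t I = joint_prob M2 Xi2 Z2 n B t I"
  shows "distr M1 hypo_space (\<lambda>\<omega>. hypo (Xi1 \<omega>) (Z1 \<omega>)) = distr M2 hypo_space (\<lambda>\<omega>. hypo (Xi2 \<omega>) (Z2 \<omega>))"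
proof (rule measure_eqI_generator_eq[OF Int_stable_hypo_miss_sets hypo_miss_sets_Pow])
  fix A :: "('a \<times> ereal) set set" assume "A \<in> hypo_miss_sets"
  then obtain P where P: "A = hypo_miss P" "finite P" "\<forall>(K, t)\<in>P. compact K"
    unfolding hypo_miss_sets_def by blast
  obtain h where h: "bij_betw h {1..card P} P"
    using ex_bij_betw_nat_finite_1[OF P(2)] by blast
  define n B t where "n = card P" and "B = fst \<circ> h" and "t = snd \<circ> h"
  have P_eq: "P = (\<lambda>i. (B i, t i)) ` {1..n}"
    using h by (auto simp: n_def B_def t_def bij_betw_def)
  have compact: "\<forall>i\<in>{1..n}. compact (B i)"
    using P(3) unfolding P_eq by auto
  show "emeasure (distr M1 hypo_space (\<lambda>\<omega>. hypo (Xi1 \<omega>) (Z1 \<omega>))) A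
      = emeasure (distr M2 hypo_space (\<lambda>\<omega>. hypo (Xi2 \<omega>) (Z2 \<omega>))) A"
    unfolding P(1) P_eq
    using emeasure_distr_hypo_miss[OF rmcs1 assms(1) compact] emeasure_distr_hypo_miss[OF rmcs2 assms(2) compact]
      joint_prob_eq[OF compact]
    by simp
next
  show "range (\<lambda>_. closed_hypographs) \<subseteq> hypo_miss_sets" "(\<Union>i::nat. closed_hypographs) = closed_hypographs"
    using closed_hypographs_in_hypo_miss_sets by auto
  have "prob_space (distr M1 hypo_space (\<lambda>\<omega>. hypo (Xi1 \<omega>) (Z1 \<omega>)))"
    using prob_space.prob_space_distr[OF assms(1) measurable_hypo_hypo_space[OF rmcs1]] .
  then have "emeasure (distr M1 hypo_space (\<lambda>\<omega>. hypo (Xi1 \<omega>) (Z1 \<omega>))) closed_hypographs = 1"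
    using prob_space.emeasure_space_1 by (fastforce simp: space_hypo_space)
  then show "emeasure (distr M1 hypo_space (\<lambda>\<omega>. hypo (Xi1 \<omega>) (Z1 \<omega>))) closed_hypographs \<noteq> \<infinity>"
    by simp
qed (simp_all add: sets_hypo_space)

theorem theorem2p3:
  fixes M1 :: "'o1 measure" and M2 :: "'o2 measure"
    and Xi1 :: "'o1 \<Rightarrow> 'a::euclidean_space set" and Z1 :: "'o1 \<Rightarrow> 'a \<Rightarrow> ereal"
    and Xi2 :: "'o2 \<Rightarrow> 'a set" and Z2 :: "'o2 \<Rightarrow> 'a \<Rightarrow> ereal"
  assumes "prob_space M1" and "complete_measure M1"
    and "prob_space M2" and "complete_measure M2"
    and "random_marked_closed_set M1 Xi1 Z1"
    and "random_marked_closed_set M2 Xi2 Z2"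
    and "\<And>n B t I. (\<forall>i\<in>{1..n}. compact (B i)) \<Longrightarrow> I \<subseteq> {1..n} \<Longrightarrow>
           joint_prob M1 Xi1 Z1 n B t I = joint_prob M2 Xi2 Z2 n B t I"
  shows "rmcs_distr M1 Xi1 Z1 = rmcs_distr M2 Xi2 Z2"
  unfolding rmcs_distr_eq_distr_hypo_space[OF assms(5)] rmcs_distr_eq_distr_hypo_space[OF assms(6)]
  using distr_hypo_space_eqI[OF assms(1,3,5,6,7)] by (rule arg_cong)

end
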